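(* Let $\varphi$ be a metric-compatible function and $T\in\mathrm{Aut}(X,\mu)$ ergodic. Let $U\in[T]_\varphi$, $A\subseteq X$ measurable, and $(A_n)_{n\ge0}$ measurable subsets of $A$ with $\lim_n\mu(A\setminus A_n)=0$. Then $\lim_n d_{\varphi,T}(U_{A_n},U_A)=0$.
   Context: $(X,\mu)$ standard atomless probability space; $\mathrm{Aut}(X,\mu)$ measure-preserving transformations modulo null sets. For aperiodic $T$, $[T]$ is the set of $U\in\mathrm{Aut}(X,\mu)$ with $U(x)=T^{c_U(x)}(x)$ a.e. for a measurable $c_U:X\to\mathbb Z$. $\varphi:\mathbb R_+\to\mathbb R_+$ is metric-compatible if subadditive, non-decreasing, $\varphi(0)=0$, $\varphi(t)>0$ for $t>0$. $[T]_\varphi=\{U\in[T]:\int_X\varphi(|c_U|)d\mu<\infty\}$, $d_{\varphi,T}(U,V)=\int_X\varphi(|c_U(x)-c_V(x)|)d\mu$. The first return map $U_B$ to a measurable $B$ is $U_B(x)=U^{n(x)}(x)$, $n(x)=\min\{n\ge1:U^n(x)\in B\}$, for $x\in B$, and $U_B(x)=x$ for $x\notin B$. *)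

theory Defs
  imports "HOL-Probability.Probability"
begin

definition std_atomless_prob :: "('a::polish_space) measure \<Rightarrow> bool" where
  "std_atomless_prob M \<longleftrightarrow> prob_space M \<and> sets M = sets borel \<and>
     (\<forall>x. emeasure M {x} = 0)"

text \<open>Measure-preserving automorphisms (representatives of elements of Aut(X,mu)).\<close>
definition mp_aut :: "'a measure \<Rightarrow> ('a \<Rightarrow> 'a) \<Rightarrow> bool" where
  "mp_aut M T \<longleftrightarrow> bij_betw T (space M) (space M) \<and> T \<in> M \<rightarrow>\<^sub>M M \<and>
     inv_into (space M) T \<in> M \<rightarrow>\<^sub>M M \<and> distr M M T = M"

definition ergodic_aut :: "'a measure \<Rightarrow> ('a \<Rightarrow> 'a) \<Rightarrow> bool" where
  "ergodic_aut M T \<longleftrightarrow> mp_aut M T \<and>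
     (\<forall>A \<in> sets M. T -` A \<inter> space M = A \<longrightarrow> measure M A = 0 \<or> measure M A = 1)"

definition tpow :: "'a measure \<Rightarrow> ('a \<Rightarrow> 'a) \<Rightarrow> int \<Rightarrow> 'a \<Rightarrow> 'a" where
  "tpow M T k = (if 0 \<le> k then T ^^ nat k else (inv_into (space M) T) ^^ nat (- k))"

definition is_cocycle :: "'a measure \<Rightarrow> ('a \<Rightarrow> 'a) \<Rightarrow> ('a \<Rightarrow> 'a) \<Rightarrow> ('a \<Rightarrow> int) \<Rightarrow> bool" where
  "is_cocycle M T U c \<longleftrightarrow> c \<in> M \<rightarrow>\<^sub>M count_space UNIV \<and>
     (AE x in M. U x = tpow M T (c x) x)"

definition full_group :: "'a measure \<Rightarrow> ('a \<Rightarrow> 'a) \<Rightarrow> ('a \<Rightarrow> 'a) set" where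
  "full_group M T = {U. mp_aut M U \<and> (\<exists>c. is_cocycle M T U c)}"

text \<open>The cocycle c_U (unique a.e. for aperiodic T).\<close>
definition cocycle :: "'a measure \<Rightarrow> ('a \<Rightarrow> 'a) \<Rightarrow> ('a \<Rightarrow> 'a) \<Rightarrow> 'a \<Rightarrow> int" where
  "cocycle M T U = (SOME c. is_cocycle M T U c)"

definition metric_compatible :: "(real \<Rightarrow> real) \<Rightarrow> bool" where
  "metric_compatible \<phi> \<longleftrightarrow> \<phi> 0 = 0 \<and>
     (\<forall>s t. 0 \<le> s \<longrightarrow> 0 \<le> t \<longrightarrow> \<phi> (s + t) \<le> \<phi> s + \<phi> t) \<and>
     (\<forall>s t. 0 \<le> s \<longrightarrow> s \<le> t \<longrightarrow> \<phi> s \<le> \<phi> t) \<and>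
     (\<forall>t > 0. \<phi> t > 0)"

definition full_group_phi :: "'a measure \<Rightarrow> (real \<Rightarrow> real) \<Rightarrow> ('a \<Rightarrow> 'a) \<Rightarrow> ('a \<Rightarrow> 'a) set" where
  "full_group_phi M \<phi> T = {U \<in> full_group M T.
      (\<integral>\<^sup>+ x. ennreal (\<phi> \<bar>real_of_int (cocycle M T U x)\<bar>) \<partial>M) < \<infinity>}"

definition d_phi :: "'a measure \<Rightarrow> (real \<Rightarrow> real) \<Rightarrow> ('a \<Rightarrow> 'a) \<Rightarrow> ('a \<Rightarrow> 'a) \<Rightarrow> ('a \<Rightarrow> 'a) \<Rightarrow> ennreal" where
  "d_phi M \<phi> T U V = (\<integral>\<^sup>+ x. ennreal (\<phi> \<bar>real_of_int (cocycle M T U x - cocycle M T V x)\<bar>) \<partial>M)"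

definition first_return :: "('a \<Rightarrow> 'a) \<Rightarrow> 'a set \<Rightarrow> 'a \<Rightarrow> 'a" where
  "first_return U B x = (if x \<in> B \<and> (\<exists>n\<ge>1. (U ^^ n) x \<in> B)
      then (U ^^ (LEAST n. n \<ge> 1 \<and> (U ^^ n) x \<in> B)) x else x)"

end

theory Submission
  imports Defs
begin

text \<open>
  Being ergodic on an atomless space, \<open>T\<close> is aperiodic, so cocycles are unique and the cocycle
  of \<open>U\<^sub>B\<close> is the Birkhoff sum \<open>\<Sum>i<r\<^sub>B(x). c(U\<^sup>i x)\<close>, where \<open>c\<close> is the cocycle of \<open>U\<close>
  and \<open>r\<^sub>B\<close> the first return time to \<open>B\<close>. For \<open>B \<subseteq> A\<close> the sums for \<open>U\<^sub>B\<close> and \<open>U\<^sub>A\<close>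
  differ by the terms \<open>r\<^sub>A(x) \<le> i < r\<^sub>B(x)\<close> when \<open>x \<in> B\<close>, and by all terms \<open>i < r\<^sub>A(x)\<close> when
  \<open>x \<in> A - B\<close>. By subadditivity of \<open>\<phi>\<close> and \<open>U\<close>-invariance of \<open>\<mu>\<close>, this bounds
  \<open>d\<^sub>\<phi>(U\<^sub>B, U\<^sub>A)\<close> by \<open>2 \<integral> H\<^sub>B \<phi>(|c|)\<close>, where \<open>H\<^sub>B(y) \<in> {0, 1}\<close> tells whether the first point of
  \<open>A\<close> on the backward orbit of \<open>y\<close> lies in \<open>A - B\<close>: the levels of the Kakutani tower over
  \<open>A - B\<close> are disjoint. Now \<open>\<integral> H\<^sub>B\<close> is the integral of \<open>r\<^sub>A\<close> over \<open>A - B\<close>, which tends to \<open>0\<close>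
  with \<open>\<mu>(A - B)\<close> since \<open>\<integral>\<^sub>A r\<^sub>A \<le> 1\<close> (Kac), and uniform integrability of \<open>\<phi>(|c|)\<close>
  concludes.
\<close>

locale mp_automorphism = prob_space M for M :: "'a measure" +
  fixes f :: "'a \<Rightarrow> 'a"
  assumes space_eq_UNIV: "space M = UNIV" and mp_aut: "mp_aut M f"
begin

lemma bij: "bij f"
  using mp_aut by (simp add: mp_aut_def space_eq_UNIV)

lemma map_measurable[measurable]: "f \<in> M \<rightarrow>\<^sub>M M"
  and inv_measurable[measurable]: "inv f \<in> M \<rightarrow>\<^sub>M M"
  and distr_eq: "distr M M f = M"
  using mp_aut by (simp_all add: mp_aut_def space_eq_UNIV)

lemma inv_apply[simp]: "inv f (f x) = x" "f (inv f x) = x"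
  using bij by (simp_all add: bij_is_inj bij_is_surj surj_f_inv_f)

lemma inv_funpow_funpow[simp]: "(inv f ^^ n) ((f ^^ n) x) = x"
  using inv_fn_o_fn_is_id[OF bij] by (metis comp_apply)

lemma funpow_inv_funpow[simp]: "(f ^^ n) ((inv f ^^ n) x) = x"
  using fn_o_inv_fn_is_id[OF bij] by (metis comp_apply)

lemma funpow_diff_apply: "j \<le> i \<Longrightarrow> (f ^^ i) x = (f ^^ (i - j)) ((f ^^ j) x)"
  by (metis funpow_add le_add_diff_inverse2 o_apply)

lemma funpow_measurable[measurable]: "f ^^ n \<in> M \<rightarrow>\<^sub>M M"
  and inv_funpow_measurable[measurable]: "inv f ^^ n \<in> M \<rightarrow>\<^sub>M M"
  by (induction n) (auto intro: measurable_comp)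

lemma distr_funpow: "distr M M (f ^^ n) = M"
proof (induction n)
  case (Suc n)
  have "distr M M (f ^^ Suc n) = distr (distr M M (f ^^ n)) M f"
    by (subst distr_distr) simp_all
  also have "\<dots> = M"
    by (simp only: Suc distr_eq)
  finally show ?case .
qed (simp add: distr_id2)

lemma vimage_funpow_sets: "B \<in> sets M \<Longrightarrow> (f ^^ n) -` B \<in> sets M"
  using measurable_sets[OF funpow_measurable] by (simp add: space_eq_UNIV)

lemma emeasure_funpow_vimage: "B \<in> sets M \<Longrightarrow> emeasure M ((f ^^ n) -` B) = emeasure M B"
  using emeasure_distr[OF funpow_measurable, of B n] by (simp add: distr_funpow space_eq_UNIV)

lemma measure_funpow_vimage: "B \<in> sets M \<Longrightarrow> measure M ((f ^^ n) -` B) = measure M B"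
  by (simp add: measure_def emeasure_funpow_vimage)

lemma AE_funpow:
  assumes "AE x in M. P x"
  shows "AE x in M. P ((f ^^ n) x)"
proof -
  obtain N where N: "{x. \<not> P x} \<subseteq> N" "N \<in> null_sets M"
    using assms by (auto elim!: AE_E simp: space_eq_UNIV null_sets_def)
  then have "(f ^^ n) -` N \<in> null_sets M"
    by (simp add: null_sets_def vimage_funpow_sets emeasure_funpow_vimage)
  then show ?thesis
    by (rule AE_I') (use N in auto)
qed

lemma nn_integral_funpow_shift:
  fixes g h :: "'a \<Rightarrow> ennreal"
  assumes [measurable]: "g \<in> borel_measurable M" "h \<in> borel_measurable M"
  shows "(\<integral>\<^sup>+ x. g x * h ((f ^^ n) x) \<partial>M) = (\<integral>\<^sup>+ y. g ((inv f ^^ n) y) * h y \<partial>M)"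
proof -
  have "(\<integral>\<^sup>+ y. g ((inv f ^^ n) y) * h y \<partial>M)
      = (\<integral>\<^sup>+ y. g ((inv f ^^ n) y) * h y \<partial>distr M M (f ^^ n))"
    by (simp add: distr_funpow)
  also have "\<dots> = (\<integral>\<^sup>+ x. g x * h ((f ^^ n) x) \<partial>M)"
    by (subst nn_integral_distr) simp_all
  finally show ?thesis ..
qed

lemma tpow_eq: "tpow M f k = (if 0 \<le> k then f ^^ nat k else inv f ^^ nat (- k))"
  by (simp add: tpow_def space_eq_UNIV)

lemma tpow_plus_1: "tpow M f (k + 1) x = f (tpow M f k x)"
proof -
  consider "k \<ge> 0" | "k = -1" | "k \<le> -2" by linarith
  then show ?thesis
  proof cases
    case 3
    then have "nat (- k) = Suc (nat (- (k + 1)))" by simp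
    then show ?thesis using 3 by (simp add: tpow_eq)
  qed (simp_all add: tpow_eq nat_add_distrib)
qed

lemma tpow_add: "tpow M f (a + b) x = tpow M f a (tpow M f b x)"
proof (induction a rule: int_induct[where k = 0])
  case (step1 i)
  have "tpow M f (i + 1 + b) x = tpow M f ((i + b) + 1) x" by (simp add: ac_simps)
  then show ?case using step1 by (simp add: tpow_plus_1)
next
  case (step2 i)
  have "tpow M f (i + b) x = f (tpow M f (i - 1 + b) x)" "tpow M f i y = f (tpow M f (i - 1) y)" for y
    using tpow_plus_1[of "i - 1 + b" x] tpow_plus_1[of "i - 1" y] by simp_all
  then show ?case using step2 by (metis inv_apply(1))
qed (simp add: tpow_eq)

lemma tpow_fixed_point_periodic:
  assumes "tpow M f k x = x" "k \<noteq> 0"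
  shows "\<exists>n\<ge>1. (f ^^ n) x = x"
proof (cases "k > 0")
  case True then show ?thesis using assms by (intro exI[of _ "nat k"]) (auto simp: tpow_eq)
next
  case False
  then have "(inv f ^^ nat (- k)) x = x" using assms by (simp add: tpow_eq)
  then have "(f ^^ nat (- k)) x = x" by (metis funpow_inv_funpow)
  then show ?thesis using assms False by (intro exI[of _ "nat (- k)"]) auto
qed

lemma cocycle_unique:
  assumes aperiodic: "AE x in M. \<forall>k\<ge>1. (f ^^ k) x \<noteq> x"
    and "is_cocycle M f V c1" "is_cocycle M f V c2"
  shows "AE x in M. c1 x = c2 x"
proof -
  have "AE x in M. V x = tpow M f (c1 x) x" "AE x in M. V x = tpow M f (c2 x) x"
    using assms unfolding is_cocycle_def by auto
  with aperiodic show ?thesis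
  proof eventually_elim
    case (elim x)
    have "tpow M f (c1 x - c2 x) x = tpow M f (- c2 x) (tpow M f (c2 x) x)"
      using tpow_add[of "- c2 x" "c1 x" x] elim by simp
    also have "\<dots> = x" using tpow_add[of "- c2 x" "c2 x" x] by (simp add: tpow_eq)
    finally show ?case using tpow_fixed_point_periodic elim by fastforce
  qed
qed

lemma cocycle_AE_eq:
  assumes "AE x in M. \<forall>k\<ge>1. (f ^^ k) x \<noteq> x" and "is_cocycle M f V c"
  shows "AE x in M. cocycle M f V x = c x"
proof -
  have "is_cocycle M f V (cocycle M f V)"
    unfolding cocycle_def by (rule someI[where P = "is_cocycle M f V", OF assms(2)])
  then show ?thesis using cocycle_unique assms by blast
qed

lemma nn_integral_cocycle_eq:
  assumes "AE x in M. \<forall>k\<ge>1. (f ^^ k) x \<noteq> x" and "is_cocycle M f V c"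
  shows "(\<integral>\<^sup>+x. g (cocycle M f V x) \<partial>M) = (\<integral>\<^sup>+x. g (c x) \<partial>M)"
  by (rule nn_integral_cong_AE[OF eventually_mono[OF cocycle_AE_eq[OF assms]]]) simp

lemma d_phi_eq_cocycles:
  assumes aperiodic: "AE x in M. \<forall>k\<ge>1. (f ^^ k) x \<noteq> x"
    and "is_cocycle M f V c" "is_cocycle M f W c'"
  shows "d_phi M \<phi> f V W = (\<integral>\<^sup>+x. ennreal (\<phi> \<bar>real_of_int (c x - c' x)\<bar>) \<partial>M)"
proof -
  have "AE x in M. cocycle M f V x = c x \<and> cocycle M f W x = c' x"
    using cocycle_AE_eq[OF aperiodic assms(2)] cocycle_AE_eq[OF aperiodic assms(3)]
    by (rule eventually_conj)
  then show ?thesis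
    unfolding d_phi_def by (rule nn_integral_cong_AE[OF eventually_mono]) simp
qed

end

section \<open>Aperiodicity of ergodic automorphisms\<close>

lemma shrinking_ball_small:
  fixes M :: "'a::metric_space measure"
  assumes "finite_measure M" "sets M = sets borel" "emeasure M {x} = 0" "e > 0"
  shows "\<exists>r>0. measure M (ball x r) < e"
proof -
  interpret finite_measure M by fact
  define A where "A i = ball x (inverse (real (Suc i)))" for i
  have "(\<Inter>i. A i) = {x}"
  proof (intro equalityI subsetI)
    fix y assume "y \<in> (\<Inter>i. A i)"
    then have "dist x y < inverse (real (Suc i))" for i by (simp add: A_def)
    then have "\<not> dist x y > 0" using reals_Archimedean not_less_iff_gr_or_eq by blast
    then show "y \<in> {x}" by simp
  qed (simp add: A_def)
  moreover have "decseq A"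
    unfolding decseq_def A_def by (intro allI impI subset_ball) (simp add: le_imp_inverse_le)
  moreover have "range A \<subseteq> sets M"
    using assms(2) by (simp add: A_def image_subset_iff)
  ultimately have "(\<lambda>i. measure M (A i)) \<longlonglongrightarrow> measure M {x}"
    using finite_Lim_measure_decseq by metis
  moreover have "measure M {x} = 0"
    using assms(3) by (simp add: measure_def)
  ultimately have "(\<lambda>i. measure M (A i)) \<longlonglongrightarrow> 0"
    by simp
  from order_tendstoD(2)[OF this assms(4)] obtain i where "measure M (A i) < e"
    by (auto simp: eventually_sequentially)
  then show ?thesis
    unfolding A_def by (intro exI[of _ "inverse (real (Suc i))"]) simp
qed

lemma atomless_small_set:
  fixes M :: "'a::{metric_space, second_countable_topology} measure"
  assumes "prob_space M" "sets M = sets borel" "\<And>x. emeasure M {x} = 0" "e > 0"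
  shows "\<exists>B\<in>sets M. 0 < measure M B \<and> measure M B < e"
proof -
  interpret prob_space M by fact
  obtain r where r: "\<And>x. r x > 0" "\<And>x. measure M (ball x (r x)) < e"
    using shrinking_ball_small[OF finite_measure assms(2,3,4)] by metis
  obtain \<F> where \<F>: "\<F> \<subseteq> range (\<lambda>x. ball x (r x))" "countable \<F>" "\<Union>\<F> = (\<Union>x. ball x (r x))"
    using Lindelof[of "range (\<lambda>x. ball x (r x))"] by auto
  have "\<Union>\<F> = space M"
    using \<F>(3) r(1) sets_eq_imp_space_eq[OF assms(2)] by force
  have "\<exists>S\<in>\<F>. S \<notin> null_sets M"
  proof (rule ccontr)
    assume "\<not> ?thesis"
    then have "(\<Union>S\<in>\<F>. S) \<in> null_sets M"
      by (intro null_sets_UN'[OF \<F>(2)]) auto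
    then have "space M \<in> null_sets M"
      using \<open>\<Union>\<F> = space M\<close> by simp
    then show False
      by (simp add: emeasure_space_1 null_sets_def)
  qed
  then obtain x where "ball x (r x) \<notin> null_sets M" using \<F>(1) by auto
  then have "measure M (ball x (r x)) > 0"
    using assms(2) by (simp add: null_sets_def emeasure_eq_measure zero_less_measure_iff)
  then show ?thesis using r(2)[of x] assms(2) by auto
qed

lemma ex_funpow_shift_periodic_iff:
  assumes periodic: "(f ^^ k) x = x" and "k > 0"
  shows "(\<exists>j<k. P ((f ^^ j) (f x))) \<longleftrightarrow> (\<exists>j<k. P ((f ^^ j) x))"
proof -
  have shift: "(f ^^ j) (f x) = (f ^^ Suc j) x" for j
    by (simp only: funpow_Suc_right o_apply)
  have periodic_mod: "(f ^^ (j mod k)) x = (f ^^ j) x" for j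
    using periodic by (rule funpow_mod_eq)
  have shift_back: "(f ^^ ((j + (k - 1)) mod k)) (f x) = (f ^^ j) x" for j
  proof -
    have "(f ^^ k) (f x) = f x"
      using periodic by (metis funpow_swap1)
    then have "(f ^^ ((j + (k - 1)) mod k)) (f x) = (f ^^ (j + (k - 1))) (f x)"
      by (rule funpow_mod_eq)
    also have "\<dots> = (f ^^ Suc (j + (k - 1))) x"
      by (rule shift)
    also have "\<dots> = (f ^^ ((j + k) mod k)) x"
      using \<open>k > 0\<close> periodic_mod[of "j + k"] by simp
    also have "\<dots> = (f ^^ j) x"
      using periodic_mod[of j] by simp
    finally show ?thesis .
  qed
  show ?thesis
  proof
    assume "\<exists>j<k. P ((f ^^ j) (f x))"
    then obtain j where "P ((f ^^ Suc j) x)" by (auto simp: shift)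
    then show "\<exists>j<k. P ((f ^^ j) x)"
      using periodic_mod[of "Suc j"] \<open>k > 0\<close> by (intro exI[of _ "Suc j mod k"]) simp
  next
    assume "\<exists>j<k. P ((f ^^ j) x)"
    then obtain j where "P ((f ^^ j) x)" by blast
    then show "\<exists>j<k. P ((f ^^ j) (f x))"
      using shift_back[of j] \<open>k > 0\<close> by (intro exI[of _ "(j + (k - 1)) mod k"]) simp
  qed
qed

lemma (in mp_automorphism) periodic_points_null:
  assumes ergodic: "ergodic_aut M f" and k: "k \<ge> 1"
    and P_sets: "{x. (f ^^ k) x = x} \<in> sets M"
    and B: "B \<in> sets M" "0 < measure M B" "measure M B < 1 / k"
  shows "measure M {x. (f ^^ k) x = x} = 0"
proof (rule ccontr)
  define P where "P = {x. (f ^^ k) x = x}"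
  have invariant_trivial: "measure M A = 0 \<or> measure M A = 1" if "A \<in> sets M" "f -` A = A" for A
    using ergodic that unfolding ergodic_aut_def space_eq_UNIV by simp
  have "f x \<in> P \<longleftrightarrow> x \<in> P" for x
    using funpow_swap1[of f k x, symmetric] inj_eq[OF bij_is_inj[OF bij]] by (simp add: P_def)
  then have P_invariant: "f -` P = P" by auto
  assume "measure M {x. (f ^^ k) x = x} \<noteq> 0"
  then have P1: "measure M P = 1"
    using invariant_trivial[OF P_sets[folded P_def] P_invariant] by (simp add: P_def)
  define S where "S = P \<inter> (\<Union>j<k. (f ^^ j) -` B)"
  have "f x \<in> S \<longleftrightarrow> x \<in> S" for x
  proof (cases "x \<in> P")
    case True
    then have "(\<exists>j<k. (f ^^ j) (f x) \<in> B) \<longleftrightarrow> (\<exists>j<k. (f ^^ j) x \<in> B)"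
      using k by (intro ex_funpow_shift_periodic_iff) (simp_all add: P_def)
    then show ?thesis using True P_invariant by (auto simp: S_def)
  qed (use P_invariant in \<open>auto simp: S_def\<close>)
  then have "f -` S = S" by auto
  moreover have S_sets: "S \<in> sets M"
    unfolding S_def using P_sets vimage_funpow_sets[OF B(1)] by (auto simp: P_def)
  ultimately have "measure M S = 0 \<or> measure M S = 1"
    using invariant_trivial by blast
  moreover have "measure M S \<le> real k * measure M B"
  proof -
    have "measure M S \<le> measure M (\<Union>j<k. (f ^^ j) -` B)"
      unfolding S_def using vimage_funpow_sets[OF B(1)] by (intro finite_measure_mono) auto
    also have "\<dots> \<le> (\<Sum>j<k. measure M ((f ^^ j) -` B))"
      using vimage_funpow_sets[OF B(1)] by (intro measure_UNION_le) auto
    finally show ?thesis by (simp add: measure_funpow_vimage B(1))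
  qed
  moreover have "measure M B \<le> measure M S"
  proof -
    have "measure M B = measure M (B \<inter> P)"
      using measure_space_inter[OF B(1) P_sets[folded P_def]] P1 prob_space by simp
    also have "\<dots> \<le> measure M S"
    proof (rule finite_measure_mono[OF _ S_sets])
      show "B \<inter> P \<subseteq> S"
        using k unfolding S_def by (auto intro!: bexI[of _ 0])
    qed
    finally show ?thesis .
  qed
  ultimately show False
    using B(2,3) k by (simp add: field_simps)
qed

lemma ergodic_AE_aperiodic:
  fixes M :: "'a::polish_space measure"
  assumes "std_atomless_prob M" and ergodic: "ergodic_aut M T"
  shows "AE x in M. \<forall>k\<ge>1. (T ^^ k) x \<noteq> x"
proof -
  have prob: "prob_space M" and sets_M: "sets M = sets borel" and atomless: "\<And>x. emeasure M {x} = 0"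
    using assms(1) by (auto simp: std_atomless_prob_def)
  interpret mp_automorphism M T
    using prob ergodic sets_eq_imp_space_eq[OF sets_M]
    by (simp add: mp_automorphism_def mp_automorphism_axioms_def ergodic_aut_def)
  have "{x. (T ^^ k) x = x} \<in> null_sets M" if k: "k \<ge> 1" for k
  proof -
    have P_sets: "{x. (T ^^ k) x = x} \<in> sets M"
    proof -
      have "T ^^ k \<in> borel_measurable M"
        using funpow_measurable measurable_cong_sets[OF refl sets_M] by blast
      then have "{x \<in> space M. (T ^^ k) x = id x} \<in> sets M"
        by (intro measurable_equality_set) (simp_all add: measurable_ident_sets sets_M)
      then show ?thesis by (simp add: space_eq_UNIV)
    qed
    obtain B where "B \<in> sets M" "0 < measure M B" "measure M B < 1 / k"
      using atomless_small_set[OF prob sets_M atomless, of "1 / k"] k by auto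
    then show ?thesis
      using periodic_points_null[OF ergodic k P_sets] P_sets by (simp add: emeasure_eq_measure null_sets_def)
  qed
  then show ?thesis
    by (subst AE_all_countable) (auto intro: AE_I')
qed

section \<open>Towers and Poincare recurrence\<close>

lemma ennreal_suminf_const_neq_top_imp_0:
  assumes "(\<Sum>i. ennreal r) \<noteq> top" "0 \<le> r"
  shows "r = 0"
proof -
  have "summable (\<lambda>_::nat. r)"
    using assms by (intro summable_suminf_not_top) simp_all
  then have "(\<lambda>_::nat. r) \<longlonglongrightarrow> 0"
    by (rule summable_LIMSEQ_zero)
  then show ?thesis by (simp add: LIMSEQ_const_iff)
qed

context mp_automorphism
begin

definition disjoint_tower :: "(nat \<Rightarrow> 'a set) \<Rightarrow> bool" where
  "disjoint_tower Q \<longleftrightarrow> (\<forall>i j x y. i < j \<longrightarrow> x \<in> Q i \<longrightarrow> y \<in> Q j \<longrightarrow> (f ^^ i) x \<noteq> (f ^^ j) y)"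

lemma disjoint_towerI:
  assumes "\<And>i j y. i < j \<Longrightarrow> y \<in> Q j \<Longrightarrow> (f ^^ (j - i)) y \<notin> Q i"
  shows "disjoint_tower Q"
  unfolding disjoint_tower_def
proof (intro allI impI notI)
  fix i j x y assume ij: "i < j" and "x \<in> Q i" "y \<in> Q j" and eq: "(f ^^ i) x = (f ^^ j) y"
  have "(f ^^ j) y = (f ^^ i) ((f ^^ (j - i)) y)"
    using funpow_diff_apply[of "j - i" j] ij by simp
  then have "x = (f ^^ (j - i)) y"
    using eq by (metis inv_funpow_funpow)
  then show False
    using assms ij \<open>x \<in> Q i\<close> \<open>y \<in> Q j\<close> by blast
qed

lemma tower_multiplicity_le_1:
  assumes "disjoint_tower Q"
  shows "(\<Sum>i. indicator (Q i) ((inv f ^^ i) y) :: ennreal) \<le> 1"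
proof (cases "\<exists>i. (inv f ^^ i) y \<in> Q i")
  case True
  then obtain i where i: "(inv f ^^ i) y \<in> Q i" by blast
  have "(inv f ^^ j) y \<notin> Q j" if "j \<noteq> i" for j
  proof
    assume "(inv f ^^ j) y \<in> Q j"
    moreover have "(f ^^ j) ((inv f ^^ j) y) = (f ^^ i) ((inv f ^^ i) y)" by simp
    ultimately show False
      using assms i that unfolding disjoint_tower_def by (metis linorder_neqE_nat)
  qed
  then have "(\<Sum>j. indicator (Q j) ((inv f ^^ j) y) :: ennreal) = (\<Sum>j\<in>{i}. indicator (Q j) ((inv f ^^ j) y))"
    by (intro suminf_finite) auto
  also have "\<dots> = 1"
    using i by simp
  finally show ?thesis by simp
qed (simp add: indicator_def)

lemma nn_integral_tower:
  fixes g :: "'a \<Rightarrow> ennreal"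
  assumes [measurable]: "\<And>i. Q i \<in> sets M" "g \<in> borel_measurable M"
  shows "(\<Sum>i. \<integral>\<^sup>+ x. indicator (Q i) x * g ((f ^^ i) x) \<partial>M)
     = (\<integral>\<^sup>+ y. (\<Sum>i. indicator (Q i) ((inv f ^^ i) y)) * g y \<partial>M)"
proof -
  have "(\<Sum>i. \<integral>\<^sup>+ x. indicator (Q i) x * g ((f ^^ i) x) \<partial>M)
      = (\<Sum>i. \<integral>\<^sup>+ y. indicator (Q i) ((inv f ^^ i) y) * g y \<partial>M)"
    by (subst nn_integral_funpow_shift) auto
  also have "\<dots> = (\<integral>\<^sup>+ y. (\<Sum>i. indicator (Q i) ((inv f ^^ i) y) * g y) \<partial>M)"
    by (rule nn_integral_suminf[symmetric]) measurable
  finally show ?thesis by simp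
qed

lemma tower_measure_le_1:
  assumes "\<And>i. Q i \<in> sets M" and "disjoint_tower Q"
  shows "(\<Sum>i. emeasure M (Q i)) \<le> 1"
proof -
  have "(\<Sum>i. emeasure M (Q i)) = (\<integral>\<^sup>+ y. (\<Sum>i. indicator (Q i) ((inv f ^^ i) y)) * 1 \<partial>M)"
    using nn_integral_tower[of Q "\<lambda>_. 1"] assms(1) by simp
  also have "\<dots> \<le> (\<integral>\<^sup>+ y. 1 \<partial>M)"
    using tower_multiplicity_le_1[OF assms(2)] by (intro nn_integral_mono) simp
  finally show ?thesis by (simp add: emeasure_space_1)
qed

theorem poincare_recurrence:
  assumes [measurable]: "B \<in> sets M"
  shows "AE x in M. x \<in> B \<longrightarrow> (\<exists>n\<ge>1. (f ^^ n) x \<in> B)"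
proof -
  define W where "W = {x\<in>B. \<forall>n\<ge>1. (f ^^ n) x \<notin> B}"
  have W_sets[measurable]: "W \<in> sets M" unfolding W_def by measurable
  have "disjoint_tower (\<lambda>_. W)"
  proof (rule disjoint_towerI)
    fix i j :: nat and y assume "i < j" "y \<in> W"
    then have "(f ^^ (j - i)) y \<notin> B"
      unfolding W_def by (auto dest!: spec[of _ "j - i"])
    then show "(f ^^ (j - i)) y \<notin> W"
      unfolding W_def by blast
  qed
  then have "(\<Sum>i. emeasure M W) \<le> 1"
    by (rule tower_measure_le_1[OF W_sets])
  then have "(\<Sum>i. ennreal (measure M W)) \<le> 1"
    by (simp only: emeasure_eq_measure)
  then have "measure M W = 0"
    by (rule ennreal_suminf_const_neq_top_imp_0[OF neq_top_trans[OF ennreal_one_neq_top]]) simp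
  then have "W \<in> null_sets M" by (simp add: null_sets_def emeasure_eq_measure)
  moreover have "{x \<in> space M. \<not> (x \<in> B \<longrightarrow> (\<exists>n\<ge>1. (f ^^ n) x \<in> B))} \<subseteq> W"
    by (auto simp: W_def)
  ultimately show ?thesis by (rule AE_I')
qed

end

section \<open>Return times\<close>

lemma measurable_int_iff_real:
  "(g \<in> M \<rightarrow>\<^sub>M count_space UNIV) \<longleftrightarrow> (\<lambda>x. real_of_int (g x)) \<in> borel_measurable M"
proof
  assume "(\<lambda>x. real_of_int (g x)) \<in> borel_measurable M"
  then have "(\<lambda>x. \<lfloor>real_of_int (g x)\<rfloor>) \<in> M \<rightarrow>\<^sub>M count_space UNIV"
    by (rule measurable_compose[OF _ measurable_real_floor])
  then show "g \<in> M \<rightarrow>\<^sub>M count_space UNIV" by simp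
qed (rule measurable_compose[OF _ measurable_count_space_eq1[THEN iffD2]], simp_all)

context mp_automorphism
begin

definition return_time :: "'a set \<Rightarrow> 'a \<Rightarrow> nat" where
  "return_time B x =
    (if x \<in> B \<and> (\<exists>n\<ge>1. (f ^^ n) x \<in> B) then LEAST n. n \<ge> 1 \<and> (f ^^ n) x \<in> B else 0)"

lemma first_return_eq: "first_return f B x = (f ^^ return_time B x) x"
  unfolding first_return_def return_time_def by auto

lemma return_time_measurable[measurable]:
  assumes [measurable]: "B \<in> sets M"
  shows "return_time B \<in> M \<rightarrow>\<^sub>M count_space UNIV"
proof -
  have [measurable]: "Measurable.pred M (\<lambda>x. (f ^^ n) x \<in> B)" for n by measurable
  show ?thesis unfolding return_time_def by measurable
qed

lemma return_time_pos_iff: "0 < return_time B x \<longleftrightarrow> x \<in> B \<and> (\<exists>n\<ge>1. (f ^^ n) x \<in> B)"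
proof
  assume returns: "x \<in> B \<and> (\<exists>n\<ge>1. (f ^^ n) x \<in> B)"
  then have "1 \<le> (LEAST n. n \<ge> 1 \<and> (f ^^ n) x \<in> B)"
    using LeastI_ex[of "\<lambda>n. n \<ge> 1 \<and> (f ^^ n) x \<in> B"] by blast
  then show "0 < return_time B x"
    using returns by (simp add: return_time_def)
qed (auto simp: return_time_def split: if_splits)

lemma
  assumes "0 < return_time B x"
  shows funpow_return_time_mem: "(f ^^ return_time B x) x \<in> B"
    and funpow_before_return_time: "\<And>m. 1 \<le> m \<Longrightarrow> m < return_time B x \<Longrightarrow> (f ^^ m) x \<notin> B"
    and return_time_le: "\<And>n. 1 \<le> n \<Longrightarrow> (f ^^ n) x \<in> B \<Longrightarrow> return_time B x \<le> n"
proof -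
  have returns: "x \<in> B \<and> (\<exists>n\<ge>1. (f ^^ n) x \<in> B)"
    using assms return_time_pos_iff by blast
  then have eq: "return_time B x = (LEAST n. n \<ge> 1 \<and> (f ^^ n) x \<in> B)"
    unfolding return_time_def by simp
  show "(f ^^ return_time B x) x \<in> B"
    unfolding eq using returns LeastI_ex[of "\<lambda>n. n \<ge> 1 \<and> (f ^^ n) x \<in> B"] by blast
  show "(f ^^ m) x \<notin> B" if "1 \<le> m" "m < return_time B x" for m
    using that not_less_Least unfolding eq by blast
  show "return_time B x \<le> n" if "1 \<le> n" "(f ^^ n) x \<in> B" for n
    unfolding eq using that by (simp add: Least_le)
qed

definition return_sum :: "('a \<Rightarrow> int) \<Rightarrow> 'a set \<Rightarrow> 'a \<Rightarrow> int" where
  "return_sum c B x = (\<Sum>i<return_time B x. c ((f ^^ i) x))"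

lemma return_sum_measurable[measurable]:
  assumes [measurable]: "c \<in> M \<rightarrow>\<^sub>M count_space UNIV" "B \<in> sets M"
  shows "return_sum c B \<in> M \<rightarrow>\<^sub>M count_space UNIV"
proof -
  have [measurable]: "(\<lambda>x. \<Sum>i<n. c ((f ^^ i) x)) \<in> M \<rightarrow>\<^sub>M count_space UNIV" for n
    unfolding measurable_int_iff_real of_int_sum by measurable
  show ?thesis
    unfolding return_sum_def
    by (rule measurable_compose_countable'[where I = UNIV]) simp_all
qed

lemma return_sum_eq_0: "x \<notin> B \<Longrightarrow> return_sum c B x = 0"
  by (simp add: return_sum_def return_time_def)

definition below_return :: "'a set \<Rightarrow> 'a set \<Rightarrow> nat \<Rightarrow> 'a set" where
  "below_return A B i = {x \<in> A - B. \<forall>m. 1 \<le> m \<longrightarrow> m \<le> i \<longrightarrow> (f ^^ m) x \<notin> A}"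

definition between_returns :: "'a set \<Rightarrow> 'a set \<Rightarrow> nat \<Rightarrow> 'a set" where
  "between_returns A B i = {x \<in> B. return_time A x \<le> i \<and> i < return_time B x}"

lemma below_return_measurable[measurable]:
  assumes [measurable]: "A \<in> sets M" "B \<in> sets M"
  shows "below_return A B i \<in> sets M"
  unfolding below_return_def by measurable

lemma between_returns_measurable[measurable]:
  assumes [measurable]: "A \<in> sets M" "B \<in> sets M"
  shows "between_returns A B i \<in> sets M"
  unfolding between_returns_def by measurable

lemma below_return_eq: "below_return A B i = below_return A {} i \<inter> (A - B)"
  unfolding below_return_def by auto

lemma disjoint_tower_below_return: "disjoint_tower (below_return A B)"
proof (rule disjoint_towerI)
  fix i j :: nat and y assume "i < j" "y \<in> below_return A B j"
  then have "(f ^^ (j - i)) y \<notin> A"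
    unfolding below_return_def by (auto dest!: spec[of _ "j - i"])
  then show "(f ^^ (j - i)) y \<notin> below_return A B i"
    unfolding below_return_def by blast
qed

lemma disjoint_tower_between_returns: "disjoint_tower (between_returns A B)"
proof (rule disjoint_towerI)
  fix i j :: nat and y assume "i < j" "y \<in> between_returns A B j"
  then have "(f ^^ (j - i)) y \<notin> B"
    unfolding between_returns_def by (intro funpow_before_return_time) auto
  then show "(f ^^ (j - i)) y \<notin> between_returns A B i"
    unfolding between_returns_def by blast
qed

lemma between_returns_shift_below_return:
  assumes "B \<subseteq> A" "x \<in> between_returns A B i"
  shows "\<exists>j\<le>i. (f ^^ j) x \<in> below_return A B (i - j)"
proof -
  have x: "x \<in> B" "return_time A x \<le> i" "i < return_time B x"
    using assms(2) by (auto simp: between_returns_def)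
  then have "0 < return_time B x" by simp
  then have "x \<in> B \<and> (\<exists>n\<ge>1. (f ^^ n) x \<in> B)"
    by (simp only: return_time_pos_iff)
  then have "x \<in> A \<and> (\<exists>n\<ge>1. (f ^^ n) x \<in> A)"
    using assms(1) by blast
  then have "0 < return_time A x"
    by (simp only: return_time_pos_iff)
  \<comment> \<open>the last visit to \<open>A\<close> up to time \<open>i\<close> precedes the return to \<open>B\<close>, hence lies in \<open>A - B\<close>\<close>
  define K where "K = {k. k \<le> i \<and> (f ^^ k) x \<in> A}"
  define j where "j = Max K"
  have "finite K" by (simp add: K_def)
  have "return_time A x \<in> K"
    using x funpow_return_time_mem[OF \<open>0 < return_time A x\<close>] by (simp add: K_def)
  have j_max: "k \<le> j" if "k \<in> K" for k
    unfolding j_def using \<open>finite K\<close> that by (rule Max_ge)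
  have "j \<in> K"
    unfolding j_def using \<open>finite K\<close> \<open>return_time A x \<in> K\<close> by (intro Max_in) auto
  then have "j \<le> i" "(f ^^ j) x \<in> A"
    by (simp_all add: K_def)
  have "1 \<le> j"
    using j_max[OF \<open>return_time A x \<in> K\<close>] \<open>0 < return_time A x\<close> by simp
  then have "(f ^^ j) x \<notin> B"
    using funpow_before_return_time[OF \<open>0 < return_time B x\<close>] \<open>j \<le> i\<close> x(3) by simp
  moreover have "(f ^^ m) ((f ^^ j) x) \<notin> A" if "1 \<le> m" "m \<le> i - j" for m
  proof
    assume "(f ^^ m) ((f ^^ j) x) \<in> A"
    then have "m + j \<in> K" using that \<open>j \<le> i\<close> by (simp add: K_def funpow_add)
    then show False using j_max[OF \<open>m + j \<in> K\<close>] that by simp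
  qed
  ultimately have "(f ^^ j) x \<in> below_return A B (i - j)"
    using \<open>(f ^^ j) x \<in> A\<close> unfolding below_return_def by blast
  then show ?thesis
    using \<open>j \<le> i\<close> by blast
qed

lemma between_multiplicity_le_below_multiplicity:
  assumes "B \<subseteq> A"
  shows "(\<Sum>i. indicator (between_returns A B i) ((inv f ^^ i) y) :: ennreal)
    \<le> (\<Sum>i. indicator (below_return A B i) ((inv f ^^ i) y))"
proof (cases "\<exists>i. (inv f ^^ i) y \<in> between_returns A B i")
  case True
  then obtain i where "(inv f ^^ i) y \<in> between_returns A B i" by blast
  from between_returns_shift_below_return[OF assms this]
  obtain j where "j \<le> i" and j: "(f ^^ j) ((inv f ^^ i) y) \<in> below_return A B (i - j)"
    by blast
  have "(f ^^ j) ((inv f ^^ i) y) = (inv f ^^ (i - j)) y"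
  proof -
    have "y = (f ^^ (i - j)) ((f ^^ j) ((inv f ^^ i) y))"
      using funpow_diff_apply[OF \<open>j \<le> i\<close>, of "(inv f ^^ i) y"] by simp
    then show ?thesis by (metis inv_funpow_funpow)
  qed
  with j have "(inv f ^^ (i - j)) y \<in> below_return A B (i - j)" by simp
  have "(\<Sum>i. indicator (between_returns A B i) ((inv f ^^ i) y) :: ennreal) \<le> 1"
    by (rule tower_multiplicity_le_1[OF disjoint_tower_between_returns])
  also have "\<dots> = indicator (below_return A B (i - j)) ((inv f ^^ (i - j)) y)"
    using \<open>(inv f ^^ (i - j)) y \<in> below_return A B (i - j)\<close> by simp
  also have "\<dots> = (\<Sum>k\<in>{i - j}. indicator (below_return A B k) ((inv f ^^ k) y))"
    by simp
  also have "\<dots> \<le> (\<Sum>k. indicator (below_return A B k) ((inv f ^^ k) y))"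
    by (intro sum_le_suminf) auto
  finally show ?thesis .
qed (simp add: indicator_def)

end

section \<open>Comparing the cocycles of two return maps\<close>

lemma metric_compatible_nonneg: "metric_compatible \<phi> \<Longrightarrow> 0 \<le> t \<Longrightarrow> 0 \<le> \<phi> t"
  unfolding metric_compatible_def by (metis order_refl)

lemma metric_compatible_sum_le:
  fixes a :: "'i \<Rightarrow> real"
  assumes mc: "metric_compatible \<phi>" and "finite I"
  shows "\<phi> \<bar>\<Sum>i\<in>I. a i\<bar> \<le> (\<Sum>i\<in>I. \<phi> \<bar>a i\<bar>)"
proof -
  have mono: "\<And>s t. 0 \<le> s \<Longrightarrow> s \<le> t \<Longrightarrow> \<phi> s \<le> \<phi> t"
    and subadd: "\<And>s t. 0 \<le> s \<Longrightarrow> 0 \<le> t \<Longrightarrow> \<phi> (s + t) \<le> \<phi> s + \<phi> t"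
    using mc unfolding metric_compatible_def by auto
  have "\<phi> (\<Sum>i\<in>I. \<bar>a i\<bar>) \<le> (\<Sum>i\<in>I. \<phi> \<bar>a i\<bar>)"
    using \<open>finite I\<close>
  proof (induction I rule: finite_induct)
    case (insert i I)
    have "\<phi> (\<Sum>j\<in>insert i I. \<bar>a j\<bar>) \<le> \<phi> \<bar>a i\<bar> + \<phi> (\<Sum>j\<in>I. \<bar>a j\<bar>)"
      using insert.hyps by (simp add: subadd sum_nonneg)
    then show ?case using insert by simp
  qed (use mc in \<open>simp add: metric_compatible_def\<close>)
  moreover have "\<phi> \<bar>\<Sum>i\<in>I. a i\<bar> \<le> \<phi> (\<Sum>i\<in>I. \<bar>a i\<bar>)"
    by (intro mono sum_abs) simp
  ultimately show ?thesis by linarith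
qed

lemma metric_compatible_sum_le_suminf_indicator:
  assumes mc: "metric_compatible \<phi>" and "finite I" and "\<And>i. i \<in> I \<Longrightarrow> x \<in> S i"
  shows "ennreal (\<phi> \<bar>real_of_int (\<Sum>i\<in>I. a i)\<bar>)
    \<le> (\<Sum>i. indicator (S i) x * ennreal (\<phi> \<bar>real_of_int (a i)\<bar>))"
proof -
  have "ennreal (\<phi> \<bar>real_of_int (\<Sum>i\<in>I. a i)\<bar>) \<le> ennreal (\<Sum>i\<in>I. \<phi> \<bar>real_of_int (a i)\<bar>)"
    using metric_compatible_sum_le[OF mc \<open>finite I\<close>, of "\<lambda>i. real_of_int (a i)"]
    by (intro ennreal_leI) (simp only: of_int_sum)
  also have "\<dots> = (\<Sum>i\<in>I. indicator (S i) x * ennreal (\<phi> \<bar>real_of_int (a i)\<bar>))"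
    using assms(3) metric_compatible_nonneg[OF mc] by (simp add: sum_ennreal)
  also have "\<dots> \<le> (\<Sum>i. indicator (S i) x * ennreal (\<phi> \<bar>real_of_int (a i)\<bar>))"
    using \<open>finite I\<close> by (intro sum_le_suminf) auto
  finally show ?thesis .
qed

context mp_automorphism
begin

lemma return_sum_diff_le:
  assumes mc: "metric_compatible \<phi>" and "B \<subseteq> A"
    and recurrent: "x \<in> B \<longrightarrow> (\<exists>n\<ge>1. (f ^^ n) x \<in> B)"
  shows "ennreal (\<phi> \<bar>real_of_int (return_sum c B x - return_sum c A x)\<bar>) \<le>
    (\<Sum>i. indicator (below_return A B i) x * ennreal (\<phi> \<bar>real_of_int (c ((f ^^ i) x))\<bar>)) +
    (\<Sum>i. indicator (between_returns A B i) x * ennreal (\<phi> \<bar>real_of_int (c ((f ^^ i) x))\<bar>))"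
    (is "?L \<le> ?below + ?between")
proof -
  consider "x \<in> B" | "x \<in> A - B" | "x \<notin> A" using \<open>B \<subseteq> A\<close> by blast
  then show ?thesis
  proof cases
    case 1
    then have "x \<in> B \<and> (\<exists>n\<ge>1. (f ^^ n) x \<in> B)"
      using recurrent by blast
    moreover from this have "x \<in> A \<and> (\<exists>n\<ge>1. (f ^^ n) x \<in> A)"
      using \<open>B \<subseteq> A\<close> by blast
    ultimately have rB: "0 < return_time B x" and rA: "0 < return_time A x"
      by (simp_all only: return_time_pos_iff)
    have "return_time A x \<le> return_time B x"
      using return_time_le[OF rA] funpow_return_time_mem[OF rB] rB \<open>B \<subseteq> A\<close> by auto
    then have "return_sum c B x - return_sum c A x = (\<Sum>i\<in>{return_time A x..<return_time B x}. c ((f ^^ i) x))"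
      using sum.atLeastLessThan_concat[of 0 "return_time A x" "return_time B x" "\<lambda>i. c ((f ^^ i) x)"]
      by (simp add: return_sum_def lessThan_atLeast0)
    then have "?L = ennreal (\<phi> \<bar>real_of_int (\<Sum>i\<in>{return_time A x..<return_time B x}. c ((f ^^ i) x))\<bar>)"
      by (simp only:)
    also have "\<dots> \<le> ?between"
      by (rule metric_compatible_sum_le_suminf_indicator[OF mc]) (simp_all add: between_returns_def 1)
    finally show ?thesis by (simp add: add_increasing)
  next
    case 2
    have below: "x \<in> below_return A B i" if "i < return_time A x" for i
      using 2 that funpow_before_return_time[of A x] by (auto simp: below_return_def)
    have "return_sum c B x - return_sum c A x = - (\<Sum>i<return_time A x. c ((f ^^ i) x))"
      using 2 by (simp add: return_sum_eq_0, simp add: return_sum_def)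
    then have "?L = ennreal (\<phi> \<bar>real_of_int (\<Sum>i<return_time A x. c ((f ^^ i) x))\<bar>)"
      by simp
    also have "\<dots> \<le> ?below"
      by (rule metric_compatible_sum_le_suminf_indicator[OF mc]) (simp_all add: below)
    finally show ?thesis by (simp add: add_increasing2)
  next
    case 3
    then have "x \<notin> B" using \<open>B \<subseteq> A\<close> by blast
    then show ?thesis
      using 3 mc by (simp add: return_sum_eq_0 metric_compatible_def)
  qed
qed

lemma nn_integral_return_sum_diff_le:
  assumes mc: "metric_compatible \<phi>" and [measurable]: "c \<in> M \<rightarrow>\<^sub>M count_space UNIV"
    and [measurable]: "A \<in> sets M" "B \<in> sets M" and "B \<subseteq> A"
  shows "(\<integral>\<^sup>+x. ennreal (\<phi> \<bar>real_of_int (return_sum c B x - return_sum c A x)\<bar>) \<partial>M)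
    \<le> 2 * (\<integral>\<^sup>+y. (\<Sum>i. indicator (below_return A B i) ((inv f ^^ i) y)) * ennreal (\<phi> \<bar>real_of_int (c y)\<bar>) \<partial>M)"
proof -
  define G where "G y = ennreal (\<phi> \<bar>real_of_int (c y)\<bar>)" for y
  have [measurable]: "G \<in> borel_measurable M"
    unfolding G_def by (rule measurable_compose[OF assms(2)]) (simp add: measurable_count_space_eq1)
  have tower: "(\<integral>\<^sup>+x. (\<Sum>i. indicator (Q i) x * G ((f ^^ i) x)) \<partial>M)
      = (\<integral>\<^sup>+y. (\<Sum>i. indicator (Q i) ((inv f ^^ i) y)) * G y \<partial>M)"
    if [measurable]: "\<And>i. Q i \<in> sets M" for Q
    by (subst nn_integral_suminf) (measurable, rule nn_integral_tower, simp_all)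
  have "AE x in M. ennreal (\<phi> \<bar>real_of_int (return_sum c B x - return_sum c A x)\<bar>)
      \<le> (\<Sum>i. indicator (below_return A B i) x * G ((f ^^ i) x))
        + (\<Sum>i. indicator (between_returns A B i) x * G ((f ^^ i) x))"
    using poincare_recurrence[OF assms(4)]
    by eventually_elim (unfold G_def, rule return_sum_diff_le[OF mc \<open>B \<subseteq> A\<close>])
  then have "(\<integral>\<^sup>+x. ennreal (\<phi> \<bar>real_of_int (return_sum c B x - return_sum c A x)\<bar>) \<partial>M)
      \<le> (\<integral>\<^sup>+x. (\<Sum>i. indicator (below_return A B i) x * G ((f ^^ i) x))
             + (\<Sum>i. indicator (between_returns A B i) x * G ((f ^^ i) x)) \<partial>M)"
    by (rule nn_integral_mono_AE)
  also have "\<dots> = (\<integral>\<^sup>+y. (\<Sum>i. indicator (below_return A B i) ((inv f ^^ i) y)) * G y \<partial>M)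
      + (\<integral>\<^sup>+y. (\<Sum>i. indicator (between_returns A B i) ((inv f ^^ i) y)) * G y \<partial>M)"
    by (simp add: nn_integral_add tower)
  also have "\<dots> \<le> (\<integral>\<^sup>+y. (\<Sum>i. indicator (below_return A B i) ((inv f ^^ i) y)) * G y \<partial>M)
      + (\<integral>\<^sup>+y. (\<Sum>i. indicator (below_return A B i) ((inv f ^^ i) y)) * G y \<partial>M)"
    using between_multiplicity_le_below_multiplicity[OF \<open>B \<subseteq> A\<close>]
    by (intro add_left_mono nn_integral_mono mult_right_mono) simp_all
  finally show ?thesis by (simp add: G_def mult_2)
qed

end

lemma ennreal_mult_le_truncation:
  fixes a h :: ennreal
  assumes "h \<le> 1"
  shows "a * h \<le> (a - of_nat K) + of_nat K * h"
proof (cases "a \<le> of_nat K")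
  case True
  then have "a * h \<le> of_nat K * h" by (intro mult_right_mono) auto
  then show ?thesis by (simp add: add_increasing)
next
  case False
  then have a: "a = (a - of_nat K) + of_nat K"
    using ennreal_ineq_diff_add[of "of_nat K" a] by (simp add: add.commute)
  have "a * h = (a - of_nat K) * h + of_nat K * h" by (subst a) (simp add: distrib_right)
  also have "\<dots> \<le> (a - of_nat K) * 1 + of_nat K * h"
    using assms by (intro add_mono mult_left_mono) auto
  finally show ?thesis by simp
qed

lemma nn_integral_diff_of_nat_tendsto_0:
  fixes g :: "'a \<Rightarrow> ennreal"
  assumes "g \<in> borel_measurable M" "(\<integral>\<^sup>+x. g x \<partial>M) < \<infinity>"
  shows "(\<lambda>K. \<integral>\<^sup>+x. g x - of_nat K \<partial>M) \<longlonglongrightarrow> 0"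
proof -
  define G where "G K x = g x - of_nat K" for K x
  have dec: "decseq G"
    by (rule decseq_SucI) (auto simp: le_fun_def G_def intro!: ennreal_minus_mono)
  have "(\<integral>\<^sup>+ x. G K x \<partial>M) < \<infinity>" for K
    using assms(2) by (rule le_less_trans[rotated]) (auto intro!: nn_integral_mono simp: G_def)
  moreover have "G K \<in> borel_measurable M" for K using assms(1) unfolding G_def by measurable
  ultimately have "(\<integral>\<^sup>+ x. (INF K. G K x) \<partial>M) = (INF K. integral\<^sup>N M (G K))"
    using dec by (intro nn_integral_monotone_convergence_INF_decseq)
  moreover have "(\<integral>\<^sup>+ x. (INF K. G K x) \<partial>M) = 0"
  proof (rule nn_integral_0_iff_AE[THEN iffD2])
    show "(\<lambda>x. INF K. G K x) \<in> borel_measurable M"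
      using assms(1) unfolding G_def by measurable
    have "AE x in M. g x \<noteq> \<infinity>" using nn_integral_PInf_AE[OF assms(1)] assms(2) by simp
    then show "AE x in M. (INF K. G K x) = 0"
    proof eventually_elim
      case (elim x)
      then obtain r where r: "0 \<le> r" "g x = ennreal r" by (cases "g x") auto
      have "(INF K. G K x) \<le> G (nat \<lceil>r\<rceil>) x" by (rule INF_lower) simp
      also have "\<dots> = 0"
        unfolding G_def r(2) using r(1)
        by (simp add: ennreal_of_nat_eq_real_of_nat diff_eq_0_iff_ennreal ennreal_leI)
      finally show ?case by simp
    qed
  qed
  moreover have "decseq (\<lambda>K. integral\<^sup>N M (G K))"
    using dec unfolding decseq_def by (auto intro!: nn_integral_mono simp: le_fun_def)
  ultimately show ?thesis using LIMSEQ_INF unfolding G_def by metis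
qed

text \<open>A single integrable function is uniformly integrable.\<close>

lemma nn_integral_mult_bounded_tendsto_0:
  fixes g :: "'a \<Rightarrow> ennreal" and h :: "nat \<Rightarrow> 'a \<Rightarrow> ennreal"
  assumes g: "g \<in> borel_measurable M" "(\<integral>\<^sup>+x. g x \<partial>M) < \<infinity>"
    and h: "\<And>n. h n \<in> borel_measurable M" "\<And>n x. h n x \<le> 1"
    and lim: "(\<lambda>n. \<integral>\<^sup>+x. h n x \<partial>M) \<longlonglongrightarrow> 0"
  shows "(\<lambda>n. \<integral>\<^sup>+x. g x * h n x \<partial>M) \<longlonglongrightarrow> 0"
proof (rule order_tendstoI)
  fix e :: ennreal assume "0 < e"
  have bound: "(\<integral>\<^sup>+x. g x * h n x \<partial>M) \<le> (\<integral>\<^sup>+x. g x - of_nat K \<partial>M) + of_nat K * (\<integral>\<^sup>+x. h n x \<partial>M)" for n K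
  proof -
    have "(\<integral>\<^sup>+x. g x * h n x \<partial>M) \<le> (\<integral>\<^sup>+x. (g x - of_nat K) + of_nat K * h n x \<partial>M)"
      by (intro nn_integral_mono ennreal_mult_le_truncation h(2))
    also have "\<dots> = (\<integral>\<^sup>+x. g x - of_nat K \<partial>M) + of_nat K * (\<integral>\<^sup>+x. h n x \<partial>M)"
      using g(1) h(1) by (simp add: nn_integral_add nn_integral_cmult)
    finally show ?thesis .
  qed
  show "\<forall>\<^sub>F n in sequentially. (\<integral>\<^sup>+x. g x * h n x \<partial>M) < e"
  proof (cases e)
    case top
    have "(\<integral>\<^sup>+x. g x * h n x \<partial>M) \<le> (\<integral>\<^sup>+x. g x \<partial>M)" for n
      using h(2) by (intro nn_integral_mono) (metis mult.right_neutral mult_left_mono zero_le)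
    then have "(\<integral>\<^sup>+x. g x * h n x \<partial>M) < e" for n
      using top g(2) by (auto intro: le_less_trans)
    then show ?thesis by simp
  next
    case (real r)
    then have "0 < ennreal (r / 2)" using \<open>0 < e\<close> by simp
    from order_tendstoD(2)[OF nn_integral_diff_of_nat_tendsto_0[OF g] this]
    obtain K where K: "(\<integral>\<^sup>+x. g x - of_nat K \<partial>M) < ennreal (r / 2)"
      by (auto simp: eventually_sequentially)
    have "(\<lambda>n. of_nat K * (\<integral>\<^sup>+x. h n x \<partial>M)) \<longlonglongrightarrow> of_nat K * 0"
      using ennreal_less_top[of "real K"] by (intro ennreal_tendsto_cmult[OF _ lim]) (simp add: ennreal_of_nat_eq_real_of_nat)
    then have "\<forall>\<^sub>F n in sequentially. of_nat K * (\<integral>\<^sup>+x. h n x \<partial>M) < ennreal (r / 2)"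
      using \<open>0 < ennreal (r / 2)\<close> by (intro order_tendstoD(2)) auto
    then show ?thesis
    proof eventually_elim
      case (elim n)
      have "(\<integral>\<^sup>+x. g x * h n x \<partial>M) < ennreal (r / 2) + ennreal (r / 2)"
        using bound[of n K] K elim by (meson add_strict_mono order.strict_trans1)
      also have "\<dots> = e" using real \<open>0 < e\<close> by (simp flip: ennreal_plus)
      finally show ?case .
    qed
  qed
qed simp

context mp_automorphism
begin

lemma nn_integral_below_return_multiplicity_tendsto_0:
  assumes [measurable]: "A \<in> sets M" "\<And>n. An n \<in> sets M"
    and lim: "(\<lambda>n. measure M (A - An n)) \<longlonglongrightarrow> 0"
  shows "(\<lambda>n. \<integral>\<^sup>+y. (\<Sum>i. indicator (below_return A (An n) i) ((inv f ^^ i) y)) \<partial>M) \<longlonglongrightarrow> 0"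
proof -
  \<comment> \<open>\<open>\<rho> x\<close> counts the levels below the first return to \<open>A\<close>, i.e. the return time of \<open>x \<in> A\<close>\<close>
  define \<rho> where "\<rho> x = (\<Sum>i. indicator (below_return A {} i) x :: ennreal)" for x
  have [measurable]: "\<rho> \<in> borel_measurable M" unfolding \<rho>_def by measurable
  have "(\<integral>\<^sup>+x. \<rho> x \<partial>M) = (\<Sum>i. emeasure M (below_return A {} i))"
    unfolding \<rho>_def by (subst nn_integral_suminf) auto
  also have "\<dots> \<le> 1"
    by (rule tower_measure_le_1[OF _ disjoint_tower_below_return]) simp
  finally have \<rho>_finite: "(\<integral>\<^sup>+x. \<rho> x \<partial>M) < \<infinity>"
    using order.strict_trans1 by fastforce
  have multiplicity_eq: "(\<integral>\<^sup>+y. (\<Sum>i. indicator (below_return A (An n) i) ((inv f ^^ i) y)) \<partial>M)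
      = (\<integral>\<^sup>+x. \<rho> x * indicator (A - An n) x \<partial>M)" for n
  proof -
    have "(\<integral>\<^sup>+y. (\<Sum>i. indicator (below_return A (An n) i) ((inv f ^^ i) y)) \<partial>M)
        = (\<Sum>i. \<integral>\<^sup>+ x. indicator (below_return A (An n) i) x * (\<lambda>_. 1) ((f ^^ i) x) \<partial>M)"
      using nn_integral_tower[of "below_return A (An n)" "\<lambda>_. 1"] by simp
    also have "\<dots> = (\<Sum>i. \<integral>\<^sup>+ x. indicator (below_return A {} i) x * indicator (A - An n) x \<partial>M)"
      by (subst below_return_eq) (simp add: indicator_inter_arith)
    also have "\<dots> = (\<integral>\<^sup>+x. \<rho> x * indicator (A - An n) x \<partial>M)"
      unfolding \<rho>_def by (subst nn_integral_suminf[symmetric]) simp_all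
    finally show ?thesis .
  qed
  have "(\<integral>\<^sup>+x. indicator (A - An n) x \<partial>M) = ennreal (measure M (A - An n))" for n
    using emeasure_eq_measure[of "A - An n"] by simp
  moreover have "(\<lambda>n. ennreal (measure M (A - An n))) \<longlonglongrightarrow> ennreal 0"
    by (rule tendsto_ennrealI[OF lim])
  ultimately have indicator_lim: "(\<lambda>n. \<integral>\<^sup>+x. indicator (A - An n) x \<partial>M) \<longlonglongrightarrow> 0"
    by (simp only: ennreal_0)
  have "(\<lambda>n. \<integral>\<^sup>+x. \<rho> x * indicator (A - An n) x \<partial>M) \<longlonglongrightarrow> 0"
    by (rule nn_integral_mult_bounded_tendsto_0[OF _ \<rho>_finite _ _ indicator_lim]) (simp_all add: indicator_def)
  then show ?thesis by (simp add: multiplicity_eq)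
qed

theorem return_sum_diff_tendsto_0:
  assumes mc: "metric_compatible \<phi>" and [measurable]: "c \<in> M \<rightarrow>\<^sub>M count_space UNIV"
    and integrable: "(\<integral>\<^sup>+y. ennreal (\<phi> \<bar>real_of_int (c y)\<bar>) \<partial>M) < \<infinity>"
    and [measurable]: "A \<in> sets M" "\<And>n. An n \<in> sets M" and "\<And>n. An n \<subseteq> A"
    and lim: "(\<lambda>n. measure M (A - An n)) \<longlonglongrightarrow> 0"
  shows "(\<lambda>n. \<integral>\<^sup>+x. ennreal (\<phi> \<bar>real_of_int (return_sum c (An n) x - return_sum c A x)\<bar>) \<partial>M) \<longlonglongrightarrow> 0"
proof -
  define G where "G y = ennreal (\<phi> \<bar>real_of_int (c y)\<bar>)" for y
  have [measurable]: "G \<in> borel_measurable M"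
    unfolding G_def by (rule measurable_compose[OF assms(2)]) (simp add: measurable_count_space_eq1)
  define H where "H n y = (\<Sum>i. indicator (below_return A (An n) i) ((inv f ^^ i) y) :: ennreal)" for n y
  have [measurable]: "H n \<in> borel_measurable M" for n unfolding H_def by measurable
  have "H n y \<le> 1" for n y
    unfolding H_def by (rule tower_multiplicity_le_1[OF disjoint_tower_below_return])
  moreover have "(\<lambda>n. \<integral>\<^sup>+y. H n y \<partial>M) \<longlonglongrightarrow> 0"
    unfolding H_def using assms(4,5) lim by (rule nn_integral_below_return_multiplicity_tendsto_0)
  ultimately have "(\<lambda>n. \<integral>\<^sup>+y. G y * H n y \<partial>M) \<longlonglongrightarrow> 0"
    using integrable unfolding G_def by (intro nn_integral_mult_bounded_tendsto_0) simp_all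
  then have "(\<lambda>n. \<integral>\<^sup>+y. H n y * G y \<partial>M) \<longlonglongrightarrow> 0"
    by (simp add: mult.commute)
  then have "(\<lambda>n. 2 * \<integral>\<^sup>+y. H n y * G y \<partial>M) \<longlonglongrightarrow> 2 * 0"
    by (rule ennreal_tendsto_cmult[rotated]) simp
  then have upper: "(\<lambda>n. 2 * \<integral>\<^sup>+y. H n y * G y \<partial>M) \<longlonglongrightarrow> 0"
    by simp
  have "(\<integral>\<^sup>+x. ennreal (\<phi> \<bar>real_of_int (return_sum c (An n) x - return_sum c A x)\<bar>) \<partial>M)
      \<le> 2 * (\<integral>\<^sup>+y. H n y * G y \<partial>M)" for n
    unfolding H_def G_def using assms(6) by (rule nn_integral_return_sum_diff_le[OF mc assms(2,4,5)])
  then show ?thesis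
    by (intro tendsto_sandwich[OF _ _ tendsto_const upper]) (simp_all add: always_eventually)
qed

end

section \<open>The cocycle of a first return map\<close>

locale full_group_cocycle = T: mp_automorphism M T + U: mp_automorphism M U
  for M :: "'a measure" and T U :: "'a \<Rightarrow> 'a" +
  fixes c :: "'a \<Rightarrow> int"
  assumes cocycle: "is_cocycle M T U c"
begin

lemma AE_funpow_cocycle: "AE x in M. \<forall>n. (U ^^ n) x = tpow M T (\<Sum>i<n. c ((U ^^ i) x)) x"
proof -
  have "AE x in M. U x = tpow M T (c x) x"
    using cocycle unfolding is_cocycle_def by simp
  then have "AE x in M. U ((U ^^ i) x) = tpow M T (c ((U ^^ i) x)) ((U ^^ i) x)" for i
    by (rule U.AE_funpow)
  then have "AE x in M. \<forall>i. U ((U ^^ i) x) = tpow M T (c ((U ^^ i) x)) ((U ^^ i) x)"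
    by (simp add: AE_all_countable)
  then show ?thesis
  proof eventually_elim
    case (elim x)
    show ?case
    proof
      fix n show "(U ^^ n) x = tpow M T (\<Sum>i<n. c ((U ^^ i) x)) x"
      proof (induction n)
        case (Suc n)
        have "(U ^^ Suc n) x = tpow M T (c ((U ^^ n) x)) ((U ^^ n) x)"
          using elim by simp
        also have "\<dots> = tpow M T (c ((U ^^ n) x) + (\<Sum>i<n. c ((U ^^ i) x))) x"
          by (simp only: Suc.IH T.tpow_add)
        finally show ?case by (simp add: add.commute)
      qed (simp add: T.tpow_eq)
    qed
  qed
qed

lemma first_return_cocycle:
  assumes "B \<in> sets M"
  shows "is_cocycle M T (first_return U B) (U.return_sum c B)"
  unfolding is_cocycle_def
proof
  show "U.return_sum c B \<in> M \<rightarrow>\<^sub>M count_space UNIV"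
    using cocycle assms by (intro U.return_sum_measurable) (simp_all add: is_cocycle_def)
  show "AE x in M. first_return U B x = tpow M T (U.return_sum c B x) x"
    using AE_funpow_cocycle
  proof eventually_elim
    case (elim x)
    then have "(U ^^ U.return_time B x) x = tpow M T (\<Sum>i<U.return_time B x. c ((U ^^ i) x)) x"
      by blast
    then show ?case by (simp only: U.first_return_eq U.return_sum_def)
  qed
qed

end

theorem mainTheorem15:
  fixes M :: "('a::polish_space) measure" and \<phi> :: "real \<Rightarrow> real"
    and T U :: "'a \<Rightarrow> 'a" and A :: "'a set" and An :: "nat \<Rightarrow> 'a set"
  assumes "std_atomless_prob M"
    and "metric_compatible \<phi>"
    and "ergodic_aut M T"
    and "U \<in> full_group_phi M \<phi> T"
    and "A \<in> sets M"
    and "\<And>n. An n \<in> sets M" and "\<And>n. An n \<subseteq> A"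
    and "(\<lambda>n. measure M (A - An n)) \<longlonglongrightarrow> 0"
  shows "(\<lambda>n. d_phi M \<phi> T (first_return U (An n)) (first_return U A)) \<longlonglongrightarrow> 0"
proof -
  have prob: "prob_space M" and "space M = UNIV"
    using assms(1) sets_eq_imp_space_eq[of M borel] by (auto simp: std_atomless_prob_def)
  obtain c where c: "is_cocycle M T U c" and "mp_aut M U"
    and integrable: "(\<integral>\<^sup>+ x. ennreal (\<phi> \<bar>real_of_int (cocycle M T U x)\<bar>) \<partial>M) < \<infinity>"
    using assms(4) by (auto simp: full_group_phi_def full_group_def)
  interpret full_group_cocycle M T U c
    using prob \<open>space M = UNIV\<close> \<open>mp_aut M U\<close> assms(3) c
    by (simp add: full_group_cocycle_def full_group_cocycle_axioms_def mp_automorphism_def mp_automorphism_axioms_def ergodic_aut_def)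
  have aperiodic: "AE x in M. \<forall>k\<ge>1. (T ^^ k) x \<noteq> x"
    using assms(1,3) by (rule ergodic_AE_aperiodic)
  have "(\<integral>\<^sup>+x. ennreal (\<phi> \<bar>real_of_int (c x)\<bar>) \<partial>M) < \<infinity>"
    using integrable T.nn_integral_cocycle_eq[OF aperiodic c, where g = "\<lambda>k. ennreal (\<phi> \<bar>real_of_int k\<bar>)"]
    by simp
  moreover have "c \<in> M \<rightarrow>\<^sub>M count_space UNIV"
    using c by (simp add: is_cocycle_def)
  moreover have "d_phi M \<phi> T (first_return U (An n)) (first_return U A)
      = (\<integral>\<^sup>+x. ennreal (\<phi> \<bar>real_of_int (U.return_sum c (An n) x - U.return_sum c A x)\<bar>) \<partial>M)" for n
    using aperiodic first_return_cocycle[OF assms(6)] first_return_cocycle[OF assms(5)]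
    by (rule T.d_phi_eq_cocycles)
  ultimately show ?thesis
    using U.return_sum_diff_tendsto_0[OF assms(2) _ _ assms(5-8)] by simp
qed

end
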